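(* Let $d,n$ be integers with $1\le d<n$, $p=d/n$, $q=1-p$, and let $\mathbf{A}$ be a random $n\times n$ matrix whose entries are independently nonzero with probability $p$ and zero with probability $q$. Then the expected number of vertices of the sparse trellis $\mathcal{T}^{\mathrm s}_n(\mathbf{A})$ is at most $$U(n)=\sum_{j=0}^n\sum_{k=0}^j(-1)^k\binom{n}{j}\binom{j}{k}\big(q^k-q^j\big)^j,$$ and $U(n)\le\big(2-e^{-d}\big)^n$.
   Context: Convention $0^0=1$. The sparse trellis $\mathcal{T}^{\mathrm s}_n(\mathbf{A})=(V,E,L)$ is built as follows: $V_0=\{\varnothing\}$; for $j=1,\dots,n$, for every $u\in V_{j-1}$ and every $i\in[n]\setminus u$ with $a_{ij}\ne0$, add $v=u\cup\{i\}$ to $V_j$ and add the edge $(u,v)$ with label $a_{ij}$. Its vertex set is $V=V_0\cup\dots\cup V_n$. *)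

theory Defs
  imports Main "HOL-Analysis.Analysis"
begin

text \<open>Sparse trellis of an n x n matrix A (0-based indices: rows and columns in {0..<n}).
  Level j (1-based, as in the paper) uses column j, here column j-1.\<close>

fun trellis_level :: "nat \<Rightarrow> (nat \<Rightarrow> nat \<Rightarrow> 'a::zero) \<Rightarrow> nat \<Rightarrow> nat set set" where
  "trellis_level n A 0 = {{}}"
| "trellis_level n A (Suc j) =
     {insert i u | u i. u \<in> trellis_level n A j \<and> i \<in> {0..<n} - u \<and> A i j \<noteq> 0}"

definition trellis_vertices :: "nat \<Rightarrow> (nat \<Rightarrow> nat \<Rightarrow> 'a::zero) \<Rightarrow> nat set set" where
  "trellis_vertices n A = (\<Union>j\<in>{0..n}. trellis_level n A j)"

definition supp_matrix :: "(nat \<times> nat) set \<Rightarrow> nat \<Rightarrow> nat \<Rightarrow> real" where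
  "supp_matrix S i j = (if (i, j) \<in> S then 1 else 0)"

text \<open>Expected number of trellis vertices when every entry of an n x n matrix is independently
  nonzero with probability p: sum over all supports S of its probability times the count.\<close>
definition expected_trellis_vertices :: "nat \<Rightarrow> real \<Rightarrow> real" where
  "expected_trellis_vertices n p =
     (\<Sum>S\<in>Pow ({0..<n} \<times> {0..<n}).
        p ^ card S * (1 - p) ^ (n * n - card S) * real (card (trellis_vertices n (supp_matrix S))))"

definition U_bound :: "nat \<Rightarrow> real \<Rightarrow> real" where
  "U_bound n q = (\<Sum>j=0..n. \<Sum>k=0..j. (-1) ^ k * real (n choose j) * real (j choose k) * (q ^ k - q ^ j) ^ j)"

end

theory Submission
  imports Defs
begin

(* A level-j vertex of the sparse trellis is a j-set v of rows such that the j x j submatrix of A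
   on the rows v and the first j columns has no zero row and no zero column. Inclusion-exclusion
   over the zero rows and columns gives the probability of this event, and summing over the
   binom(n,j) choices of v gives U(n).

   For the second bound drop the row condition: U(n) <= sum_j binom(n,j) (1 - q^j)^j, to be
   compared with (2 - b)^n = sum_j binom(n,j) (1 - b)^j, where b = e^-d. If n > 2d, the terms with
   j <= n - d satisfy q^j >= b, and each of the d top terms j = n + 1 - k is compensated by the
   slack in the term j = k. If n <= 2d, the estimate (1 - q^j)^j <= 1 - q^j reduces the claim to
   n 2^(n-1) b <= (1 + q)^n - 1, which holds for n >= 12 by growth and is checked numerically for
   n <= 11. *)

section \<open>Random subsets and zero lines\<close>

definition subset_prob :: "real \<Rightarrow> 'a set \<Rightarrow> 'a set \<Rightarrow> real" where
  "subset_prob p X S = (\<Prod>x\<in>X. if x \<in> S then p else 1 - p)"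

lemma subset_prob_eq:
  assumes "finite X" "S \<subseteq> X"
  shows "subset_prob p X S = p ^ card S * (1 - p) ^ (card X - card S)"
proof -
  have "subset_prob p X S = (\<Prod>x\<in>S. p) * (\<Prod>x\<in>X - S. 1 - p)"
    unfolding subset_prob_def using assms
    by (subst prod.subset_diff[of S X])
       (auto simp: mult.commute intro!: arg_cong2[where f = "(*)"] prod.cong)
  then show ?thesis
    using assms by (simp add: card_Diff_subset finite_subset)
qed

lemma subset_prob_nonneg: "0 \<le> p \<Longrightarrow> p \<le> 1 \<Longrightarrow> 0 \<le> subset_prob p X S"
  unfolding subset_prob_def by (intro prod_nonneg) auto

lemma sum_subset_prob:
  assumes "finite X"
  shows "(\<Sum>S\<in>Pow X. subset_prob p X S) = 1"
proof -
  have "(\<Sum>S\<in>Pow X. subset_prob p X S) = (\<Sum>S\<in>Pow X. (\<Prod>x\<in>S. p) * (\<Prod>x\<in>X - S. 1 - p))"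
    using assms by (intro sum.cong refl) (simp add: subset_prob_eq card_Diff_subset finite_subset)
  also have "\<dots> = (\<Prod>x\<in>X. p + (1 - p))"
    by (rule prod_add[OF assms, symmetric])
  finally show ?thesis by simp
qed

lemma sum_subset_prob_disjoint:
  assumes "finite X" "Z \<subseteq> X"
  shows "(\<Sum>S\<in>Pow X. subset_prob p X S * of_bool (S \<inter> Z = {})) = (1 - p) ^ card Z"
proof -
  have split: "subset_prob p X S = (1 - p) ^ card Z * subset_prob p (X - Z) S" if "S \<subseteq> X - Z" for S
  proof -
    have "subset_prob p X S
        = (\<Prod>x\<in>X - Z. if x \<in> S then p else 1 - p) * (\<Prod>x\<in>Z. if x \<in> S then p else 1 - p)"
      unfolding subset_prob_def using assms by (subst prod.subset_diff[of Z X]) auto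
    also have "(\<Prod>x\<in>Z. if x \<in> S then p else 1 - p) = (\<Prod>x\<in>Z. 1 - p)"
      using that by (intro prod.cong) auto
    finally show ?thesis by (simp add: subset_prob_def mult.commute)
  qed
  have "(\<Sum>S\<in>Pow X. subset_prob p X S * of_bool (S \<inter> Z = {}))
      = (\<Sum>S\<in>{S\<in>Pow X. S \<inter> Z = {}}. subset_prob p X S)"
    using assms by (simp add: sum.inter_filter[symmetric] of_bool_def if_distrib cong: if_cong)
  also have "{S\<in>Pow X. S \<inter> Z = {}} = Pow (X - Z)" by auto
  also have "(\<Sum>S\<in>Pow (X - Z). subset_prob p X S) = (1 - p) ^ card Z"
    using assms by (simp add: split sum_distrib_left[symmetric] sum_subset_prob)
  finally show ?thesis .
qed

lemma of_bool_Ball_eq_prod: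
  assumes "finite A"
  shows "of_bool (\<forall>c\<in>A. Q c) = (\<Prod>c\<in>A. of_bool (Q c) :: 'a :: comm_semiring_1)"
  using assms
proof (induction A rule: finite_induct)
  case (insert x F)
  then show ?case by (simp flip: insert.IH)
qed simp

lemma of_bool_Ball_eq_sum:
  assumes "finite C"
  shows "(of_bool (\<forall>c\<in>C. P c) :: 'a :: comm_ring_1)
    = (\<Sum>L\<in>Pow C. (-1) ^ card L * of_bool (\<forall>c\<in>L. \<not> P c))"
proof -
  have "(of_bool (\<forall>c\<in>C. P c) :: 'a) = (\<Prod>c\<in>C. 1 - of_bool (\<not> P c))"
    by (simp add: of_bool_Ball_eq_prod[OF assms] of_bool_not_iff)
  also have "\<dots> = (\<Sum>L\<in>Pow C. (-1) ^ card L * (\<Prod>c\<in>L. of_bool (\<not> P c)))"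
    by (simp add: prod_diff_conv_sum[OF assms])
  also have "\<dots> = (\<Sum>L\<in>Pow C. (-1) ^ card L * of_bool (\<forall>c\<in>L. \<not> P c))"
    using assms by (intro sum.cong refl) (auto simp: of_bool_Ball_eq_prod finite_subset)
  finally show ?thesis .
qed

lemma sum_Pow_card:
  assumes "finite R"
  shows "(\<Sum>K\<in>Pow R. g (card K)) = (\<Sum>k=0..card R. of_nat (card R choose k) * g k)"
proof -
  have "(\<Sum>K\<in>Pow R. g (card K)) = (\<Sum>k=0..card R. \<Sum>K\<in>{K\<in>Pow R. card K = k}. g (card K))"
    using assms by (intro sum.group[symmetric]) (auto intro: card_mono)
  also have "\<dots> = (\<Sum>k=0..card R. of_nat (card R choose k) * g k)"
  proof (rule sum.cong[OF refl])
    fix k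
    have "{K\<in>Pow R. card K = k} = {K. K \<subseteq> R \<and> card K = k}" by auto
    then show "(\<Sum>K\<in>{K\<in>Pow R. card K = k}. g (card K)) = of_nat (card R choose k) * g k"
      using n_subsets[OF assms, of k] by simp
  qed
  finally show ?thesis .
qed

lemma sum_Pow_power_card:
  assumes "finite C"
  shows "(\<Sum>L\<in>Pow C. x ^ card L) = (x + 1 :: 'a :: comm_semiring_1) ^ card C"
  using prod_add[OF assms, of "\<lambda>_. x" "\<lambda>_. 1"] by simp

lemma sum_Pow_signed_power_card:
  fixes q :: "'a :: comm_ring_1"
  assumes "finite C" "k \<le> card C"
  shows "(\<Sum>L\<in>Pow C. (-1) ^ card L * q ^ (k * card C + (card C - k) * card L))
    = (q ^ k - q ^ card C) ^ card C"
proof -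
  have "(-1) ^ l * q ^ (k * card C + (card C - k) * l) = (q ^ k) ^ card C * (- (q ^ (card C - k))) ^ l"
    for l
  proof -
    have "(-1) ^ l * q ^ (k * card C + (card C - k) * l) = (q ^ k) ^ card C * ((-1) ^ l * (q ^ (card C - k)) ^ l)"
      by (simp only: power_add power_mult mult.left_commute)
    then show ?thesis by (simp only: power_mult_distrib[symmetric] mult_minus1)
  qed
  then have "(\<Sum>L\<in>Pow C. (-1) ^ card L * q ^ (k * card C + (card C - k) * card L))
      = (q ^ k) ^ card C * (\<Sum>L\<in>Pow C. (- (q ^ (card C - k))) ^ card L)"
    by (simp only: sum_distrib_left)
  also have "\<dots> = (q ^ k * (1 - q ^ (card C - k))) ^ card C"
    by (simp only: sum_Pow_power_card[OF assms(1)] power_mult_distrib add.commute diff_conv_add_uminus)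
  also have "q ^ k * (1 - q ^ (card C - k)) = q ^ k - q ^ card C"
    using assms(2) by (simp add: right_diff_distrib flip: power_add)
  finally show ?thesis .
qed

lemma card_Times_Un_Times:
  assumes "finite R" "finite C" "K \<subseteq> R" "L \<subseteq> C"
  shows "card (K \<times> C \<union> R \<times> L) = card K * card C + (card R - card K) * card L"
proof -
  have "K \<times> C \<union> R \<times> L = K \<times> C \<union> (R - K) \<times> L" using assms by auto
  moreover have "card (K \<times> C \<union> (R - K) \<times> L) = card (K \<times> C) + card ((R - K) \<times> L)"
    using assms by (intro card_Un_disjoint) (auto intro: finite_subset)
  ultimately show ?thesis
    using assms by (simp add: card_cartesian_product card_Diff_subset finite_subset)
qed

definition no_zero_line :: "('a \<times> 'b) set \<Rightarrow> 'a set \<Rightarrow> 'b set \<Rightarrow> bool" where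
  "no_zero_line S R C \<longleftrightarrow> (\<forall>i\<in>R. \<exists>c\<in>C. (i, c) \<in> S) \<and> (\<forall>c\<in>C. \<exists>i\<in>R. (i, c) \<in> S)"

(* Inclusion-exclusion formula for the probability that a random j x j matrix of density p has
   neither a zero row nor a zero column. *)
definition no_zero_line_prob :: "real \<Rightarrow> nat \<Rightarrow> real" where
  "no_zero_line_prob p j = (\<Sum>k=0..j. (-1) ^ k * real (j choose k) * ((1 - p) ^ k - (1 - p) ^ j) ^ j)"

lemma of_bool_no_zero_line_eq_sum:
  assumes "finite R" "finite C"
  shows "(of_bool (no_zero_line S R C) :: real)
    = (\<Sum>K\<in>Pow R. \<Sum>L\<in>Pow C. (-1) ^ card K * (-1) ^ card L * of_bool (S \<inter> (K \<times> C \<union> R \<times> L) = {}))"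
proof -
  have "(of_bool (no_zero_line S R C) :: real)
      = of_bool (\<forall>i\<in>R. \<exists>c\<in>C. (i, c) \<in> S) * of_bool (\<forall>c\<in>C. \<exists>i\<in>R. (i, c) \<in> S)"
    by (simp add: no_zero_line_def)
  also have "\<dots> = (\<Sum>K\<in>Pow R. \<Sum>L\<in>Pow C. (-1) ^ card K * of_bool (\<forall>i\<in>K. \<not> (\<exists>c\<in>C. (i, c) \<in> S))
                   * ((-1) ^ card L * of_bool (\<forall>c\<in>L. \<not> (\<exists>i\<in>R. (i, c) \<in> S))))"
    by (simp only: of_bool_Ball_eq_sum[OF assms(1)] of_bool_Ball_eq_sum[OF assms(2)] sum_product)
  also have "\<dots> = (\<Sum>K\<in>Pow R. \<Sum>L\<in>Pow C. (-1) ^ card K * (-1) ^ card L * of_bool (S \<inter> (K \<times> C \<union> R \<times> L) = {}))"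
  proof -
    have "(\<forall>i\<in>K. \<not> (\<exists>c\<in>C. (i, c) \<in> S)) \<and> (\<forall>c\<in>L. \<not> (\<exists>i\<in>R. (i, c) \<in> S))
        \<longleftrightarrow> S \<inter> (K \<times> C \<union> R \<times> L) = {}" for K L
      by blast
    then show ?thesis
      by (simp only: of_bool_conj[symmetric] mult_ac)
  qed
  finally show ?thesis .
qed

lemma sum_subset_prob_no_zero_line:
  assumes "finite X" "finite R" "finite C" "R \<times> C \<subseteq> X" "card R = j" "card C = j"
  shows "(\<Sum>S\<in>Pow X. subset_prob p X S * of_bool (no_zero_line S R C)) = no_zero_line_prob p j"
proof -
  define q where "q = 1 - p"
  have "(\<Sum>S\<in>Pow X. subset_prob p X S * of_bool (no_zero_line S R C))
      = (\<Sum>K\<in>Pow R. \<Sum>L\<in>Pow C. (-1) ^ card K * (-1) ^ card L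
           * (\<Sum>S\<in>Pow X. subset_prob p X S * of_bool (S \<inter> (K \<times> C \<union> R \<times> L) = {})))"
    unfolding of_bool_no_zero_line_eq_sum[OF assms(2,3)] sum_distrib_left
    by (subst sum.swap, rule sum.cong[OF refl], subst sum.swap) (simp add: mult_ac)
  also have "\<dots> = (\<Sum>K\<in>Pow R. \<Sum>L\<in>Pow C. (-1) ^ card K * (-1) ^ card L
           * q ^ (card K * j + (j - card K) * card L))"
  proof (intro sum.cong refl)
    fix K L assume "K \<in> Pow R" "L \<in> Pow C"
    then have K: "K \<subseteq> R" and L: "L \<subseteq> C" and sub: "K \<times> C \<union> R \<times> L \<subseteq> X"
      using assms(4) by auto
    have "(\<Sum>S\<in>Pow X. subset_prob p X S * of_bool (S \<inter> (K \<times> C \<union> R \<times> L) = {}))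
        = q ^ (card K * j + (j - card K) * card L)"
      by (simp only: sum_subset_prob_disjoint[OF assms(1) sub] card_Times_Un_Times[OF assms(2,3) K L]
          assms(5,6) q_def)
    then show "(-1) ^ card K * (-1) ^ card L
           * (\<Sum>S\<in>Pow X. subset_prob p X S * of_bool (S \<inter> (K \<times> C \<union> R \<times> L) = {}))
        = (-1) ^ card K * (-1) ^ card L * q ^ (card K * j + (j - card K) * card L)"
      by (simp only:)
  qed
  also have "\<dots> = (\<Sum>K\<in>Pow R. (-1) ^ card K * (q ^ card K - q ^ j) ^ j)"
  proof (intro sum.cong refl)
    fix K assume "K \<in> Pow R"
    then have "card K \<le> card C" using card_mono[OF assms(2), of K] assms(5,6) by simp
    then show "(\<Sum>L\<in>Pow C. (-1) ^ card K * (-1) ^ card L * q ^ (card K * j + (j - card K) * card L))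
        = (-1) ^ card K * (q ^ card K - q ^ j) ^ j"
      using sum_Pow_signed_power_card[OF assms(3), of "card K" q] assms(6)
      by (simp only: mult.assoc flip: sum_distrib_left)
  qed
  also have "\<dots> = no_zero_line_prob p j"
    using sum_Pow_card[OF assms(2), of "\<lambda>k. (-1) ^ k * (q ^ k - q ^ j) ^ j"]
    by (simp add: no_zero_line_prob_def q_def assms(5) mult_ac)
  finally show ?thesis .
qed

lemma sum_subset_prob_columns_hit:
  assumes "finite X" "finite R" "finite C" "R \<times> C \<subseteq> X"
  shows "(\<Sum>S\<in>Pow X. subset_prob p X S * of_bool (\<forall>c\<in>C. \<exists>i\<in>R. (i, c) \<in> S))
    = (1 - (1 - p) ^ card R) ^ card C"
proof -
  have "(\<Sum>S\<in>Pow X. subset_prob p X S * of_bool (\<forall>c\<in>C. \<exists>i\<in>R. (i, c) \<in> S))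
      = (\<Sum>L\<in>Pow C. (-1) ^ card L * (\<Sum>S\<in>Pow X. subset_prob p X S * of_bool (S \<inter> R \<times> L = {})))"
  proof -
    have empty_iff: "(\<forall>c\<in>L. \<not> (\<exists>i\<in>R. (i, c) \<in> S)) \<longleftrightarrow> S \<inter> R \<times> L = {}" for S L
      by auto
    show ?thesis
      unfolding of_bool_Ball_eq_sum[OF assms(3)] sum_distrib_left
      by (subst sum.swap) (simp only: empty_iff mult_ac)
  qed
  also have "\<dots> = (\<Sum>L\<in>Pow C. (- ((1 - p) ^ card R)) ^ card L)"
  proof (intro sum.cong refl)
    fix L assume "L \<in> Pow C"
    then have "R \<times> L \<subseteq> X" using assms(4) by auto
    then show "(-1) ^ card L * (\<Sum>S\<in>Pow X. subset_prob p X S * of_bool (S \<inter> R \<times> L = {}))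
        = (- ((1 - p) ^ card R)) ^ card L"
      by (simp only: sum_subset_prob_disjoint[OF assms(1)] card_cartesian_product power_mult
          power_mult_distrib[symmetric] mult_minus1)
  qed
  also have "\<dots> = (1 - (1 - p) ^ card R) ^ card C"
    by (simp add: sum_Pow_power_card assms(3))
  finally show ?thesis .
qed

lemma no_zero_line_prob_le:
  assumes "0 \<le> p" "p \<le> 1"
  shows "no_zero_line_prob p j \<le> (1 - (1 - p) ^ j) ^ j"
proof -
  define X where "X = {0..<j} \<times> {0..<j}"
  have "no_zero_line_prob p j = (\<Sum>S\<in>Pow X. subset_prob p X S * of_bool (no_zero_line S {0..<j} {0..<j}))"
    by (rule sum_subset_prob_no_zero_line[symmetric]) (auto simp: X_def)
  also have "\<dots> \<le> (\<Sum>S\<in>Pow X. subset_prob p X S * of_bool (\<forall>c\<in>{0..<j}. \<exists>i\<in>{0..<j}. (i, c) \<in> S))"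
    by (intro sum_mono mult_left_mono subset_prob_nonneg assms) (auto simp: no_zero_line_def)
  also have "\<dots> = (1 - (1 - p) ^ j) ^ j"
    by (subst sum_subset_prob_columns_hit) (auto simp: X_def)
  finally show ?thesis .
qed

section \<open>The trellis\<close>

lemma trellis_level_subset:
  "trellis_level n (supp_matrix S) j \<subseteq> {v. v \<subseteq> {0..<n} \<and> card v = j \<and> no_zero_line S v {0..<j}}"
proof (induction j)
  case 0
  then show ?case by (auto simp: no_zero_line_def)
next
  case (Suc j)
  show ?case
  proof
    fix v assume "v \<in> trellis_level n (supp_matrix S) (Suc j)"
    then obtain u i where v: "v = insert i u" and u: "u \<in> trellis_level n (supp_matrix S) j"
      and i: "i < n" "i \<notin> u" and ij: "(i, j) \<in> S"
      by (auto simp: supp_matrix_def split: if_splits)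
    from u Suc.IH have u_sub: "u \<subseteq> {0..<n}" and "card u = j" and u_lines: "no_zero_line S u {0..<j}"
      by auto
    then have "card v = Suc j" using v i finite_subset by fastforce
    moreover have "no_zero_line S v {0..<Suc j}"
      using u_lines ij unfolding v no_zero_line_def by (auto simp: atLeast0LessThan lessThan_Suc)
    ultimately show "v \<in> {v. v \<subseteq> {0..<n} \<and> card v = Suc j \<and> no_zero_line S v {0..<Suc j}}"
      using v i u_sub by auto
  qed
qed

lemma card_trellis_vertices_le:
  "real (card (trellis_vertices n (supp_matrix S)))
     \<le> (\<Sum>j=0..n. \<Sum>v | v \<subseteq> {0..<n} \<and> card v = j. of_bool (no_zero_line S v {0..<j}))"
proof -
  let ?V = "\<lambda>j. {v. v \<subseteq> {0..<n} \<and> card v = j}"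
  have fin: "finite (?V j)" for j
    by (rule finite_subset[of _ "Pow {0..<n}"]) auto
  have "card (trellis_vertices n (supp_matrix S)) \<le> (\<Sum>j=0..n. card (trellis_level n (supp_matrix S) j))"
    unfolding trellis_vertices_def by (rule card_UN_le) simp
  also have "\<dots> \<le> (\<Sum>j=0..n. card (?V j \<inter> {v. no_zero_line S v {0..<j}}))"
  proof (intro sum_mono card_mono)
    fix j
    show "finite (?V j \<inter> {v. no_zero_line S v {0..<j}})" using fin by blast
    show "trellis_level n (supp_matrix S) j \<subseteq> ?V j \<inter> {v. no_zero_line S v {0..<j}}"
      using trellis_level_subset[of n S j] by blast
  qed
  finally have "real (card (trellis_vertices n (supp_matrix S)))
      \<le> (\<Sum>j=0..n. real (card (?V j \<inter> {v. no_zero_line S v {0..<j}})))"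
    unfolding of_nat_sum[symmetric] of_nat_le_iff .
  then show ?thesis
    using fin by simp
qed

lemma expected_trellis_vertices_le:
  assumes "0 \<le> p" "p \<le> 1"
  shows "expected_trellis_vertices n p \<le> (\<Sum>j=0..n. real (n choose j) * no_zero_line_prob p j)"
proof -
  define X where "X = {0..<n} \<times> {0..<n}"
  let ?V = "\<lambda>j. {v. v \<subseteq> {0..<n} \<and> card v = j}"
  have X: "finite X" "card X = n * n" by (simp_all add: X_def card_cartesian_product)
  have "expected_trellis_vertices n p
      = (\<Sum>S\<in>Pow X. subset_prob p X S * real (card (trellis_vertices n (supp_matrix S))))"
    unfolding expected_trellis_vertices_def X_def[symmetric]
    by (intro sum.cong refl) (simp add: subset_prob_eq X)
  also have "\<dots> \<le> (\<Sum>S\<in>Pow X. subset_prob p X S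
      * (\<Sum>j=0..n. \<Sum>v\<in>?V j. of_bool (no_zero_line S v {0..<j})))"
    by (intro sum_mono mult_left_mono card_trellis_vertices_le subset_prob_nonneg assms)
  also have "\<dots> = (\<Sum>j=0..n. \<Sum>v\<in>?V j. \<Sum>S\<in>Pow X. subset_prob p X S * of_bool (no_zero_line S v {0..<j}))"
    unfolding sum_distrib_left by (subst sum.swap, intro sum.cong refl, rule sum.swap)
  also have "\<dots> = (\<Sum>j=0..n. \<Sum>v\<in>?V j. no_zero_line_prob p j)"
  proof (intro sum.cong refl)
    fix j v assume "j \<in> {0..n}" "v \<in> ?V j"
    then show "(\<Sum>S\<in>Pow X. subset_prob p X S * of_bool (no_zero_line S v {0..<j})) = no_zero_line_prob p j"
      by (intro sum_subset_prob_no_zero_line X) (auto simp: X_def finite_subset)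
  qed
  also have "\<dots> = (\<Sum>j=0..n. real (n choose j) * no_zero_line_prob p j)"
    by (simp add: n_subsets)
  finally show ?thesis .
qed

lemma U_bound_eq: "U_bound n (1 - p) = (\<Sum>j=0..n. real (n choose j) * no_zero_line_prob p j)"
  unfolding U_bound_def no_zero_line_prob_def sum_distrib_left
  by (intro sum.cong refl) (simp only: mult_ac)

section \<open>Elementary estimates\<close>

lemma exp_one_ge: "2718/1000 \<le> exp (1::real)"
  using e_approx_32 by (simp add: abs_if split: if_split_asm)

lemma exp_quarter_ge: "41/32 \<le> exp (1/4::real)"
  using exp_lower_Taylor_quadratic[of "1/4::real"] by (simp add: power2_eq_square)

lemma exp_minus_nat_le: "exp (- real d) \<le> (1000/2718) ^ d"
proof -
  have "exp (-1::real) = inverse (exp 1)" by (simp add: exp_minus)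
  also have "\<dots> \<le> inverse (2718/1000)" using exp_one_ge by (intro le_imp_inverse_le) auto
  finally have "exp (-1::real) \<le> 1000/2718" by simp
  moreover have "exp (- real d) = exp (-1) ^ d" by (simp add: exp_of_nat_mult[symmetric])
  ultimately show ?thesis by (simp add: power_mono)
qed

lemma exp_ge_50_mult: "6 \<le> d \<Longrightarrow> 50 * real d \<le> exp (real d)"
proof (induction d rule: nat_induct_at_least)
  case base
  have "(2718/1000::real) ^ 6 \<le> exp 1 ^ 6" using exp_one_ge by (intro power_mono) auto
  also have "exp (1::real) ^ 6 = exp 6" by (simp add: exp_of_nat_mult[symmetric])
  finally show ?case by (simp add: power_divide)
next
  case (Suc d)
  have "exp (real (Suc d)) = exp 1 * exp (real d)" by (simp add: exp_add[symmetric])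
  also have "\<dots> \<ge> 2718/1000 * (50 * real d)" using Suc exp_one_ge by (intro mult_mono) auto
  finally show ?case using Suc(1) by simp
qed

lemma exp_minus_le_one_minus:
  fixes s :: real
  assumes "0 \<le> s" "s \<le> 1/2"
  shows "exp (- (s + s^2)) \<le> 1 - s"
proof -
  define x where "x = s + s^2"
  have halve: "t * s \<le> t / 2" if "0 \<le> t" for t
    using mult_left_mono[OF assms(2) that] by simp
  have s3: "s^3 \<le> s^2 / 2" using halve[of "s^2"] assms by (simp add: power2_eq_square power3_eq_cube)
  have s4: "s^4 \<le> s^3 / 2" using halve[of "s^3"] assms by (simp add: power_numeral_reduce power3_eq_cube)
  have s5: "s^5 \<le> s^4 / 2" using halve[of "s^4"] assms by (simp add: power_numeral_reduce)
  have "(1 - s) * (1 + x + x^2/2) = 1 + s^2/2 - s^3/2 - s^4/2 - s^5/2"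
    unfolding x_def by (simp add: field_simps power2_eq_square power_numeral_reduce power3_eq_cube)
  also have "\<dots> \<ge> 1"
  proof -
    have "0 \<le> s^2" by simp
    then have "s^3 + s^4 + s^5 \<le> s^2" using s3 s4 s5 by linarith
    then show ?thesis by linarith
  qed
  finally have "1 \<le> (1 - s) * (1 + x + x^2/2)" .
  also have "\<dots> \<le> (1 - s) * exp x"
    using assms exp_lower_Taylor_quadratic[of x] by (intro mult_left_mono) (auto simp: x_def)
  finally have "1 / exp x \<le> 1 - s" by (simp add: field_simps)
  moreover have "exp (- x) = 1 / exp x" by (simp add: exp_minus field_simps)
  ultimately show ?thesis unfolding x_def[symmetric] by simp
qed

lemma power_diff_le_mult_diff:
  fixes x y :: real
  assumes "0 \<le> y" "y \<le> x" "x \<le> 1"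
  shows "x ^ j - y ^ j \<le> real j * (x - y)"
proof (induction j)
  case 0 then show ?case by simp
next
  case (Suc j)
  have yj: "y ^ j \<le> x ^ j" using assms by (intro power_mono) auto
  have y1: "y ^ j \<le> 1" using assms by (intro power_le_one) auto
  have "x ^ Suc j - y ^ Suc j = x * (x ^ j - y ^ j) + (x - y) * y ^ j" by (simp add: algebra_simps)
  also have "\<dots> \<le> 1 * (x ^ j - y ^ j) + (x - y) * 1"
    using assms yj y1 by (intro add_mono mult_mono) auto
  also have "\<dots> \<le> real j * (x - y) + (x - y)" using Suc by simp
  finally show ?case by (simp add: algebra_simps)
qed

lemma mult_diff_le_power_diff:
  fixes x y :: real
  assumes "0 \<le> y" "y \<le> x" "1 \<le> k"
  shows "(x - y) * x ^ (k - 1) \<le> x ^ k - y ^ k"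
proof -
  obtain m where k: "k = Suc m" using assms(3) by (cases k) auto
  have "y * y ^ m \<le> y * x ^ m" using assms by (intro mult_left_mono power_mono) auto
  then show ?thesis unfolding k by (simp add: algebra_simps)
qed

lemma binomial_mult_reflect:
  assumes "1 \<le> k" "k \<le> n"
  shows "(n choose (n + 1 - k)) * (n + 1 - k) = (n choose k) * k"
proof -
  obtain n' k' where n: "n = Suc n'" and k: "k = Suc k'" and "k' \<le> n'"
    using assms by (cases n; cases k) auto
  then have "(n choose (n + 1 - k)) * (n + 1 - k) = Suc n' * (n' choose (n' - k'))"
    using Suc_times_binomial[of "n' - k'" n'] by (simp add: Suc_diff_le mult.commute)
  also have "\<dots> = (n choose k) * k"
    using Suc_times_binomial[of k' n'] \<open>k' \<le> n'\<close>
    by (simp add: n k algebra_simps binomial_symmetric[symmetric])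
  finally show ?thesis .
qed

section \<open>The pair inequality\<close>

lemma linear_le_power_41_32: "6 \<le> k \<Longrightarrow> real k / 2 + 49/50 \<le> 49/50 * (41/32) ^ k"
proof (induction k rule: nat_induct_at_least)
  case base then show ?case by (simp add: power_divide)
next
  case (Suc k)
  have "(6::real) \<le> real k" using Suc(1) by simp
  then have "real (Suc k) / 2 + 49/50 \<le> 41/32 * (real k / 2 + 49/50)" unfolding of_nat_Suc by (simp add: field_simps)
  also have "\<dots> \<le> 41/32 * (49/50 * (41/32) ^ k)" using Suc by simp
  finally show ?case by simp
qed

lemma one_add_mult_power_41_32_ge:
  assumes k: "1 \<le> k" and d: "6 \<le> r + k"
  shows "49/50 \<le> (1 + real r) * (49/50 * (41/32) ^ k - real k / 2)"
proof (cases "6 \<le> k")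
  case True
  then have h: "49/50 \<le> 49/50 * (41/32) ^ k - real k / 2" using linear_le_power_41_32 by fastforce
  also have "\<dots> = 1 * (49/50 * (41/32) ^ k - real k / 2)" by simp
  also have "\<dots> \<le> (1 + real r) * (49/50 * (41/32) ^ k - real k / 2)"
    using h by (intro mult_right_mono) auto
  finally show ?thesis .
next
  case False
  then have "k = 1 \<or> k = 2 \<or> k = 3 \<or> k = 4 \<or> k = 5" using k by arith
  then have "49/100 \<le> 49/50 * (41/32) ^ k - real k / 2"
    by (elim disjE) (simp_all add: power_divide)
  moreover have "1 \<le> r" using False d by simp
  ultimately have "2 * (49/100) \<le> (1 + real r) * (49/50 * (41/32) ^ k - real k / 2)"
    by (intro mult_mono) auto
  then show ?thesis by simp
qed

(* For s <= 1/2 we have s + s^2 <= 3/4, and for d >= 6 the factor 1 - (k - 1) e^-d of the pair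
   inequality below is at least 49/50. *)
lemma half_mult_le_exp:
  fixes d k :: nat
  assumes "6 \<le> d" "1 \<le> k" "k \<le> d"
  shows "real k * (real d + 1 - real k) / 2 \<le> (exp (real d - 3 * real k / 4) - 1) * (49/50)"
proof -
  define r where "r = d - k"
  define E where "E = (41/32::real) ^ k"
  have d: "real d = real r + real k" using assms r_def by simp
  have "E \<le> exp (1/4) ^ k" unfolding E_def using exp_quarter_ge by (intro power_mono) auto
  also have "exp (1/4) ^ k = exp (real k / 4)" by (simp add: exp_of_nat_mult[symmetric])
  finally have "(1 + real r) * E \<le> exp (real r) * exp (real k / 4)"
    using one_le_power[of "41/32::real" k] by (intro mult_mono) (auto simp: E_def add.commute)
  also have "\<dots> = exp (real d - 3 * real k / 4)"
    unfolding d by (simp add: exp_add[symmetric] algebra_simps)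
  finally have exp_ge: "(1 + real r) * E \<le> exp (real d - 3 * real k / 4)" .
  have "real k * (real d + 1 - real k) / 2 = (1 + real r) * (real k / 2)"
    unfolding d by (simp add: algebra_simps)
  also have "\<dots> \<le> ((1 + real r) * E - 1) * (49/50)"
  proof -
    have "49/50 \<le> (1 + real r) * (49/50 * E - real k / 2)"
      unfolding E_def using one_add_mult_power_41_32_ge[of k r] assms by (simp add: r_def)
    then show ?thesis by (simp add: algebra_simps)
  qed
  also have "\<dots> \<le> (exp (real d - 3 * real k / 4) - 1) * (49/50)"
    using exp_ge by (intro mult_right_mono) auto
  finally show ?thesis .
qed

lemma pair_inequality_numeric:
  assumes "1 \<le> k" "k \<le> d" "d \<le> (5::nat)"
  shows "real k * (real d / (2 * real d + 1)) * (real d + 1 - real k)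
    \<le> ((real d - (real d / (2 * real d + 1) + (real d / (2 * real d + 1))^2) * real k) +
        (real d - (real d / (2 * real d + 1) + (real d / (2 * real d + 1))^2) * real k)^2 / 2)
       * (1 - (real k - 1) / (1 + real d + real d ^ 2 / 2))"
proof -
  have "d = 1 \<or> d = 2 \<or> d = 3 \<or> d = 4 \<or> d = 5" using assms by arith
  moreover have "k = 1 \<or> k = 2 \<or> k = 3 \<or> k = 4 \<or> k = 5" using assms by arith
  ultimately show ?thesis using assms(2) by (elim disjE) (simp_all add: power_divide power2_eq_square)
qed

lemma add_square_le_three_quarters: "0 \<le> s \<Longrightarrow> s \<le> 1/2 \<Longrightarrow> s + s^2 \<le> (3/4 :: real)"
  using power_mono[of s "1/2" 2] by (simp add: power2_eq_square)

lemma exp_minus_le_inverse_quadratic: "0 \<le> x \<Longrightarrow> exp (- x) \<le> 1 / (1 + x + x^2/2 :: real)"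
  using exp_lower_Taylor_quadratic[of x]
  by (simp add: exp_minus divide_simps add_pos_nonneg)

(* With s = d/n, the pair inequality lets the slack in the term j = k of the sparse regime absorb
   the excess of the term j = n + 1 - k; s <= d/(2d + 1) there. *)
lemma pair_inequality_large_d:
  fixes d k :: nat and s :: real
  assumes d: "6 \<le> d" and k: "1 \<le> k" "k \<le> d" and s: "0 < s" "s \<le> 1/2"
  shows "real k * s * (real d + 1 - real k)
    \<le> (exp (real d - (s + s^2) * real k) - 1) * (1 - (real k - 1) * exp (- real d))"
proof -
  have "real k * s * (real d + 1 - real k) \<le> real k * (real d + 1 - real k) / 2"
    using s k mult_left_mono[of s "1/2" "real k * (real d + 1 - real k)"] by (simp add: mult_ac)
  also have "\<dots> \<le> (exp (real d - 3 * real k / 4) - 1) * (49/50)"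
    by (rule half_mult_le_exp[OF d k])
  also have "\<dots> \<le> (exp (real d - (s + s^2) * real k) - 1) * (1 - (real k - 1) * exp (- real d))"
  proof (rule mult_mono)
    have "(s + s^2) * real k \<le> 3/4 * real k"
      using add_square_le_three_quarters[of s] s by (intro mult_right_mono) auto
    then show "exp (real d - 3 * real k / 4) - 1 \<le> exp (real d - (s + s^2) * real k) - 1"
      by simp
    have "(real k - 1) * exp (- real d) \<le> real d * exp (- real d)"
      using k by (intro mult_right_mono) auto
    also have "\<dots> = real d / exp (real d)" by (simp add: exp_minus field_simps)
    also have "\<dots> \<le> 1/50" using exp_ge_50_mult[OF d] by (simp add: field_simps)
    finally show "49/50 \<le> 1 - (real k - 1) * exp (- real d)" by simp
    have "3/4 * real k \<le> real d" using k by simp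
    with \<open>(s + s^2) * real k \<le> 3/4 * real k\<close> show "0 \<le> exp (real d - (s + s^2) * real k) - 1"
      by simp
  qed simp
  finally show ?thesis .
qed

lemma pair_inequality_small_d:
  fixes d k :: nat and s :: real
  assumes d: "d \<le> 5" and k: "1 \<le> k" "k \<le> d" and s: "0 < s" "s \<le> real d / (2 * real d + 1)"
  shows "real k * s * (real d + 1 - real k)
    \<le> (exp (real d - (s + s^2) * real k) - 1) * (1 - (real k - 1) * exp (- real d))"
proof -
  define \<sigma> where "\<sigma> = real d / (2 * real d + 1)"
  define x where "x = real d - (\<sigma> + \<sigma>^2) * real k"
  have \<sigma>: "0 \<le> \<sigma>" "\<sigma> \<le> 1/2" "s \<le> \<sigma>" using s unfolding \<sigma>_def by (auto simp: field_simps)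
  have "(\<sigma> + \<sigma>^2) * real k \<le> 3/4 * real k"
    using add_square_le_three_quarters[OF \<sigma>(1,2)] by (intro mult_right_mono) auto
  moreover have "3/4 * real k \<le> real d" using k by simp
  ultimately have x0: "0 \<le> x" unfolding x_def by simp
  have "real k * s * (real d + 1 - real k) \<le> real k * \<sigma> * (real d + 1 - real k)"
    using \<sigma> k by (intro mult_right_mono mult_left_mono) auto
  also have "\<dots> \<le> (x + x^2/2) * (1 - (real k - 1) / (1 + real d + real d ^ 2 / 2))"
    using pair_inequality_numeric[OF k d] unfolding x_def \<sigma>_def .
  also have "\<dots> \<le> (exp (real d - (s + s^2) * real k) - 1) * (1 - (real k - 1) * exp (- real d))"
  proof (rule mult_mono)
    have "s + s^2 \<le> \<sigma> + \<sigma>^2" using \<sigma> s by (intro add_mono power_mono) auto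
    then have x_le: "x \<le> real d - (s + s^2) * real k"
      unfolding x_def by (intro diff_left_mono mult_right_mono) auto
    then have "exp x \<le> exp (real d - (s + s^2) * real k)" by simp
    then show "x + x^2/2 \<le> exp (real d - (s + s^2) * real k) - 1"
      using exp_lower_Taylor_quadratic[OF x0] by linarith
    have "(real k - 1) * exp (- real d) \<le> (real k - 1) * (1 / (1 + real d + real d ^ 2 / 2))"
      using k exp_minus_le_inverse_quadratic[of "real d"] by (intro mult_left_mono) auto
    then show "1 - (real k - 1) / (1 + real d + real d ^ 2 / 2) \<le> 1 - (real k - 1) * exp (- real d)"
      by simp
    show "0 \<le> exp (real d - (s + s^2) * real k) - 1" using x0 x_le by simp
    have "real k \<le> real d" "0 \<le> real d ^ 2 / 2" using k by simp_all
    then have "real k - 1 \<le> 1 + real d + real d ^ 2 / 2" by linarith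
    then show "0 \<le> 1 - (real k - 1) / (1 + real d + real d ^ 2 / 2)"
      by (simp add: field_simps add_pos_nonneg)
  qed
  finally show ?thesis .
qed

lemma pair_inequality:
  fixes d k :: nat and s :: real
  assumes k: "1 \<le> k" "k \<le> d" and s: "0 < s" "s \<le> real d / (2 * real d + 1)"
  shows "real k * s * (real d + 1 - real k)
    \<le> (exp (real d - (s + s^2) * real k) - 1) * (1 - (real k - 1) * exp (- real d))"
proof (cases "6 \<le> d")
  case True
  have "real d / (2 * real d + 1) \<le> 1/2" by (simp add: field_simps)
  then show ?thesis
    by (rule pair_inequality_large_d[OF True k s(1) order.trans[OF s(2)]])
next
  case False
  then show ?thesis using pair_inequality_small_d[OF _ k s] by simp
qed

section \<open>The sparse regime\<close>

locale sparse_regime =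
  fixes n d :: nat
  assumes d_pos: "1 \<le> d" and n_ge: "2 * d + 1 \<le> n"
begin

definition s :: real where "s = real d / real n"
definition q :: real where "q = 1 - s"
definition b :: real where "b = exp (- real d)"

definition deficit :: "nat \<Rightarrow> real" where
  "deficit j = real (n choose j) * ((1 - q ^ j) ^ j - (1 - b) ^ j)"

lemma s_mult_n: "s * real n = real d"
  using n_ge by (simp add: s_def)

lemma s_pos: "0 < s"
  using d_pos n_ge by (simp add: s_def)

lemma s_le: "s \<le> real d / (2 * real d + 1)"
  unfolding s_def using d_pos n_ge by (intro divide_left_mono) auto

lemma s_le_half: "s \<le> 1/2"
  using s_le by (rule order.trans) (simp add: field_simps)

lemma q_pos: "0 < q" and q_le_one: "q \<le> 1"
  using s_pos s_le_half by (auto simp: q_def)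

lemma b_pos: "0 < b" and b_le_one: "b \<le> 1"
  by (auto simp: b_def)

lemma exp_le_q_power: "exp (- (s + s^2) * real m) \<le> q ^ m"
proof -
  have "exp (- (s + s^2) * real m) = exp (- (s + s^2)) ^ m"
    by (simp add: exp_of_nat_mult[symmetric] mult.commute)
  also have "\<dots> \<le> q ^ m"
    unfolding q_def using s_pos s_le_half by (intro power_mono exp_minus_le_one_minus) auto
  finally show ?thesis .
qed

lemma q_power_le_exp: "q ^ m \<le> exp (- s * real m)"
proof -
  have "q ^ m \<le> exp (- s) ^ m"
    using exp_ge_add_one_self[of "- s"] q_pos by (intro power_mono) (auto simp: q_def)
  also have "\<dots> = exp (- s * real m)" by (simp add: exp_of_nat_mult[symmetric] mult.commute)
  finally show ?thesis .
qed

lemma b_le_q_power: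
  assumes "j \<le> n - d"
  shows "b \<le> q ^ j"
proof -
  have "real (n - d) = real n - real d" using n_ge by simp
  then have "(s + s^2) * real (n - d) = real d - real d * s^2"
    using s_mult_n by (simp add: algebra_simps power2_eq_square)
  also have "\<dots> \<le> real d" by simp
  finally have "- real d \<le> - (s + s^2) * real (n - d)" by (simp only: mult_minus_left neg_le_iff_le)
  then have "b \<le> exp (- (s + s^2) * real (n - d))" by (simp add: b_def)
  also have "\<dots> \<le> q ^ (n - d)" by (rule exp_le_q_power)
  also have "\<dots> \<le> q ^ j" using assms q_pos q_le_one by (intro power_decreasing) auto
  finally show ?thesis .
qed

lemma deficit_nonpos:
  assumes "j \<le> n - d"
  shows "deficit j \<le> 0"
proof -
  have "(1 - q^j)^j \<le> (1 - b)^j"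
    using b_le_q_power[OF assms] q_pos q_le_one b_le_one by (intro power_mono) (auto simp: power_le_one)
  then show ?thesis unfolding deficit_def by (simp add: mult_nonneg_nonpos)
qed

lemma power_gap_ge:
  assumes k: "1 \<le> k" "k \<le> d"
  shows "real k * s * (real d + 1 - real k) * b \<le> (1 - b) ^ k - (1 - q ^ k) ^ k"
proof -
  have qk: "b \<le> q ^ k" using k n_ge by (intro b_le_q_power) simp
  have "b \<le> 1 / (1 + real d)"
    using exp_ge_add_one_self[of "real d"] by (simp add: b_def exp_minus field_simps)
  then have "(real k - 1) * b \<le> (real k - 1) * (1 / (1 + real d))" using k by (intro mult_left_mono) auto
  also have "\<dots> \<le> 1" using k by (simp add: field_simps)
  finally have b_mult: "0 \<le> 1 - (real k - 1) * b" by simp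
  have "real k * s * (real d + 1 - real k) * b
      \<le> (exp (real d - (s + s^2) * real k) - 1) * (1 - (real k - 1) * b) * b"
    using pair_inequality[OF k s_pos s_le] b_pos by (intro mult_right_mono) (auto simp: b_def)
  also have "\<dots> = (exp (- (s + s^2) * real k) - b) * (1 - (real k - 1) * b)"
  proof -
    have "exp (real d - (s + s^2) * real k) * b = exp (- (s + s^2) * real k)"
      unfolding b_def by (simp add: exp_add[symmetric] algebra_simps)
    then show ?thesis by (simp add: algebra_simps)
  qed
  also have "\<dots> \<le> (q ^ k - b) * (1 - (real k - 1) * b)"
    using exp_le_q_power[of k] b_mult by (intro mult_right_mono) auto
  also have "\<dots> \<le> (q ^ k - b) * (1 - b) ^ (k - 1)"
  proof -
    have "1 + real (k - 1) * (- b) \<le> (1 + - b) ^ (k - 1)"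
      using b_le_one by (intro Bernoulli_inequality) auto
    then have "1 - (real k - 1) * b \<le> (1 - b) ^ (k - 1)" using k by (simp add: of_nat_diff)
    then show ?thesis using qk by (intro mult_left_mono) auto
  qed
  also have "\<dots> \<le> (1 - b) ^ k - (1 - q ^ k) ^ k"
    using mult_diff_le_power_diff[of "1 - q ^ k" "1 - b" k] qk q_pos q_le_one k
    by (simp add: power_le_one)
  finally show ?thesis .
qed

lemma deficit_low_bound:
  assumes k: "1 \<le> k" "k \<le> d"
  shows "real (n choose k) * real k * b * (s * (real d + 1 - real k)) \<le> - deficit k"
proof -
  have "real (n choose k) * (real k * s * (real d + 1 - real k) * b)
      \<le> real (n choose k) * ((1 - b) ^ k - (1 - q ^ k) ^ k)"
    using power_gap_ge[OF k] by (intro mult_left_mono) auto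
  then show ?thesis unfolding deficit_def by (simp add: algebra_simps)
qed

lemma b_minus_q_power_le:
  assumes k: "1 \<le> k" "k \<le> d"
  shows "b - q ^ (n + 1 - k) \<le> b * (s * (real d + 1 - real k))"
proof -
  define t where "t = s * (real d + 1 - real k)"
  have n_split: "n = (n + 1 - k) + (k - 1)" using k n_ge by simp
  have "- (s + s^2) * real n = - real d + - t + - s * real (k - 1)"
    using s_mult_n k unfolding t_def by (simp add: algebra_simps power2_eq_square of_nat_diff)
  then have "b * exp (- t) * exp (- s * real (k - 1)) = exp (- (s + s^2) * real n)"
    by (simp add: b_def flip: exp_add)
  also have "\<dots> \<le> q ^ (n + 1 - k) * q ^ (k - 1)"
    using exp_le_q_power[of n] by (subst (asm) n_split) (simp add: power_add)
  also have "\<dots> \<le> q ^ (n + 1 - k) * exp (- s * real (k - 1))"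
    using q_power_le_exp[of "k - 1"] q_pos by (intro mult_left_mono) auto
  finally have "b * exp (- t) \<le> q ^ (n + 1 - k)" by simp
  moreover have "b * (1 - t) \<le> b * exp (- t)"
    using exp_ge_add_one_self[of "- t"] b_pos by (intro mult_left_mono) auto
  ultimately show ?thesis unfolding t_def by (simp add: algebra_simps)
qed

lemma deficit_high_bound:
  assumes k: "1 \<le> k" "k \<le> d"
  shows "deficit (n + 1 - k) \<le> real (n choose k) * real k * b * (s * (real d + 1 - real k))"
proof -
  define j where "j = n + 1 - k"
  have slack: "0 \<le> real (n choose k) * real k * b * (s * (real d + 1 - real k))"
    using b_pos s_pos k by (intro mult_nonneg_nonneg) auto
  show ?thesis
  proof (cases "b \<le> q ^ j")
    case True
    then have "(1 - q^j)^j \<le> (1 - b)^j"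
      using q_pos q_le_one by (intro power_mono) (auto simp: power_le_one)
    then have "deficit j \<le> 0" unfolding deficit_def by (simp add: mult_nonneg_nonpos)
    with slack show ?thesis unfolding j_def by linarith
  next
    case False
    have "(1 - q^j)^j - (1 - b)^j \<le> real j * ((1 - q^j) - (1 - b))"
      using False b_le_one q_pos by (intro power_diff_le_mult_diff) auto
    also have "\<dots> \<le> real j * (b * (s * (real d + 1 - real k)))"
      using b_minus_q_power_le[OF k] unfolding j_def by (intro mult_left_mono) auto
    finally have "deficit j \<le> (real (n choose j) * real j) * (b * (s * (real d + 1 - real k)))"
      unfolding deficit_def by (simp add: mult.assoc mult_left_mono)
    also have "real (n choose j) * real j = real (n choose k) * real k"
      unfolding j_def of_nat_mult[symmetric] using k n_ge by (intro arg_cong[of _ _ real] binomial_mult_reflect) auto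
    finally show ?thesis by (simp add: j_def mult_ac)
  qed
qed

lemma sum_deficit_nonpos: "(\<Sum>j=0..n. deficit j) \<le> 0"
proof -
  have split: "{0..n} = {0..n - d} \<union> {n - d + 1..n}" using n_ge by auto
  have "(\<Sum>j=0..n. deficit j) = (\<Sum>j=0..n - d. deficit j) + (\<Sum>j=n - d + 1..n. deficit j)"
    unfolding split by (rule sum.union_disjoint) auto
  also have "(\<Sum>j=n - d + 1..n. deficit j) = (\<Sum>k=1..d. deficit (n + 1 - k))"
    using n_ge by (intro sum.reindex_bij_witness[of _ "\<lambda>k. n + 1 - k" "\<lambda>j. n + 1 - j"]) auto
  also have "(\<Sum>j=0..n - d. deficit j) \<le> (\<Sum>k=1..d. deficit k)"
  proof -
    have sub: "{1..d} \<subseteq> {0..n - d}" using n_ge by auto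
    have "(\<Sum>j=0..n - d. deficit j) = (\<Sum>k=1..d. deficit k) + (\<Sum>j\<in>{0..n - d} - {1..d}. deficit j)"
      using sum.subset_diff[OF sub finite_atLeastAtMost, of deficit] by linarith
    also have "(\<Sum>j\<in>{0..n - d} - {1..d}. deficit j) \<le> 0" by (intro sum_nonpos deficit_nonpos) auto
    finally show ?thesis by simp
  qed
  also have "(\<Sum>k=1..d. deficit k) + (\<Sum>k=1..d. deficit (n + 1 - k)) \<le> 0"
    unfolding sum.distrib[symmetric]
  proof (intro sum_nonpos)
    fix k assume "k \<in> {1..d}"
    then show "deficit k + deficit (n + 1 - k) \<le> 0"
      using deficit_low_bound[of k] deficit_high_bound[of k] by simp
  qed
  finally show ?thesis by simp
qed

lemma binomial_sum_le: "(\<Sum>j=0..n. real (n choose j) * (1 - q ^ j) ^ j) \<le> (2 - b) ^ n"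
proof -
  have "(2 - b) ^ n = (\<Sum>j\<le>n. real (n choose j) * (1 - b) ^ j)"
    using binomial_ring[of "1 - b" 1 n] by simp
  moreover have "(\<Sum>j=0..n. real (n choose j) * (1 - q ^ j) ^ j)
      = (\<Sum>j=0..n. deficit j) + (\<Sum>j=0..n. real (n choose j) * (1 - b) ^ j)"
    unfolding deficit_def sum.distrib[symmetric] by (intro sum.cong refl) (simp add: algebra_simps)
  ultimately show ?thesis using sum_deficit_nonpos by (simp add: atLeast0AtMost)
qed

end

lemma binomial_sum_le_sparse:
  fixes n d :: nat
  assumes "1 \<le> d" "2 * d + 1 \<le> n"
  shows "(\<Sum>j=0..n. real (n choose j) * (1 - (1 - real d / real n) ^ j) ^ j) \<le> (2 - exp (- real d)) ^ n"
proof -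
  interpret sparse_regime n d using assms by unfold_locales
  show ?thesis using binomial_sum_le by (simp add: q_def s_def b_def)
qed

section \<open>The dense regime\<close>

lemma binomial_sum_le_two_power:
  fixes q :: real
  assumes "0 \<le> q" "q \<le> 1"
  shows "(\<Sum>j=0..n. real (n choose j) * (1 - q ^ j) ^ j) \<le> 2 ^ n - (1 + q) ^ n + 1"
proof -
  have term_le: "(1 - q ^ j) ^ j \<le> (1 - q ^ j) + of_bool (j = 0)" for j :: nat
  proof (cases "j = 0")
    case False
    have "0 \<le> 1 - q ^ j" "1 - q ^ j \<le> 1" using assms by (auto simp: power_le_one)
    then have "(1 - q ^ j) ^ j \<le> (1 - q ^ j) ^ 1" using False by (intro power_decreasing) auto
    then show ?thesis by simp
  qed simp
  have "(\<Sum>j=0..n. real (n choose j) * (1 - q ^ j) ^ j)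
      \<le> (\<Sum>j=0..n. real (n choose j) * ((1 - q ^ j) + of_bool (j = 0)))"
    by (intro sum_mono mult_left_mono term_le) auto
  also have "\<dots> = (\<Sum>j\<le>n. real (n choose j)) - (\<Sum>j\<le>n. real (n choose j) * q ^ j * 1 ^ (n - j)) + 1"
    by (simp add: sum.distrib sum_subtractf algebra_simps atLeast0AtMost)
  also have "\<dots> = 2 ^ n - (1 + q) ^ n + 1"
    using choose_row_sum[of n] binomial_ring[of q 1 n] by (simp add: add.commute flip: of_nat_sum)
  finally show ?thesis .
qed

lemma binomial_sum_le_of_linear_bound:
  fixes q b :: real
  assumes n: "1 \<le> n" and q: "0 \<le> q" "q \<le> 1" and b: "0 \<le> b" "b \<le> 1"
    and bound: "real n * 2 ^ (n - 1) * b \<le> (1 + q) ^ n - 1"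
  shows "(\<Sum>j=0..n. real (n choose j) * (1 - q ^ j) ^ j) \<le> (2 - b) ^ n"
proof -
  have "2 ^ n - real n * 2 ^ (n - 1) * b = 2 ^ n * (1 + real n * (- (b / 2)))"
    using n by (simp add: algebra_simps power_eq_if)
  also have "\<dots> \<le> 2 ^ n * (1 + - (b / 2)) ^ n"
    using b by (intro mult_left_mono Bernoulli_inequality) auto
  also have "\<dots> = (2 - b) ^ n" by (simp add: power_mult_distrib[symmetric] algebra_simps)
  finally show ?thesis using binomial_sum_le_two_power[OF q, of n] bound by linarith
qed

lemma real_le_power_large: "12 \<le> n \<Longrightarrow> real n \<le> (3/4 * (41/32)^2) ^ n"
proof (induction n rule: nat_induct_at_least)
  case base then show ?case by (simp add: power_divide)
next
  case (Suc n)
  have "real (Suc n) \<le> 3/4 * (41/32)^2 * real n" using Suc(1) by (simp add: power_divide)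
  also have "\<dots> \<le> 3/4 * (41/32)^2 * (3/4 * (41/32)^2) ^ n" using Suc by (intro mult_left_mono) auto
  finally show ?case by simp
qed

lemma one_minus_half_mult_exp_ge:
  fixes s :: real
  assumes "1/2 \<le> s" "s \<le> 1"
  shows "3/4 * (41/32)^2 \<le> (1 - s / 2) * exp s"
proof -
  have "(41/32::real)^2 \<le> exp (1/4) ^ 2" using exp_quarter_ge by (intro power_mono) auto
  also have "exp (1/4::real) ^ 2 = exp (1/2)" by (simp add: exp_of_nat_mult[symmetric])
  finally have e_half: "(41/32)^2 \<le> exp (1/2::real)" .
  have "(s + 1/2) * exp (1/2) \<le> exp (s - 1/2) * exp (1/2)"
    using exp_ge_add_one_self[of "s - 1/2"] by (intro mult_right_mono) auto
  then have exp_s: "(s + 1/2) * exp (1/2) \<le> exp s" by (simp flip: exp_add)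
  have "3/4 \<le> (1 - s / 2) * (s + 1/2)"
  proof -
    have "0 \<le> (s - 1/2) * (1 - s)" using assms by (intro mult_nonneg_nonneg) auto
    then show ?thesis by (simp add: field_simps)
  qed
  then have "3/4 * (41/32)^2 \<le> (1 - s / 2) * (s + 1/2) * exp (1/2)"
    using e_half assms by (intro mult_mono) auto
  also have "\<dots> \<le> (1 - s / 2) * exp s"
    using exp_s assms by (simp add: mult.assoc mult_left_mono)
  finally show ?thesis .
qed

(* With rho = (1 - s/2) e^s and s n = d we have 2^n e^-d rho^n = (2 - s)^n, and n <= rho^n. *)
lemma dense_linear_bound_large_n:
  fixes n d :: nat
  assumes n: "12 \<le> n" and nd: "n \<le> 2 * d" "d < n"
  shows "real n * 2 ^ (n - 1) * exp (- real d) \<le> (1 + (1 - real d / real n)) ^ n - 1"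
proof -
  define s where "s = real d / real n"
  define \<rho> where "\<rho> = (1 - s / 2) * exp s"
  have s_mult_n: "s * real n = real d" using n by (simp add: s_def)
  have s: "1/2 \<le> s" "s < 1" using n nd by (simp_all add: s_def field_simps)
  have "real n \<le> (3/4 * (41/32)^2) ^ n" by (rule real_le_power_large[OF n])
  also have "\<dots> \<le> \<rho> ^ n"
    unfolding \<rho>_def using one_minus_half_mult_exp_ge[of s] s by (intro power_mono) auto
  finally have n_le: "real n \<le> \<rho> ^ n" .
  have "exp (- real d) * exp s ^ n = 1"
    using s_mult_n by (simp add: exp_of_nat_mult[symmetric] exp_add[symmetric] mult.commute)
  then have "2 ^ n * exp (- real d) * \<rho> ^ n = (2 * (1 - s / 2)) ^ n"
    unfolding \<rho>_def power_mult_distrib by (simp add: mult_ac)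
  also have "\<dots> = (2 - s) ^ n" by (simp add: algebra_simps)
  finally have ident: "2 ^ n * exp (- real d) * \<rho> ^ n = (2 - s) ^ n" .
  have "2 * (real n * 2 ^ (n - 1) * exp (- real d)) = 2 ^ n * exp (- real d) * real n"
    using n by (simp add: power_eq_if mult_ac)
  also have "\<dots> \<le> (2 - s) ^ n"
    unfolding ident[symmetric] using n_le by (intro mult_left_mono) auto
  finally have half: "real n * 2 ^ (n - 1) * exp (- real d) \<le> (2 - s) ^ n / 2" by simp
  have "1 + real n * (1 - s) \<le> (1 + (1 - s)) ^ n" using s by (intro Bernoulli_inequality) auto
  moreover have "real n * (1 - s) = real n - real d" using s_mult_n by (simp add: algebra_simps)
  ultimately have "2 \<le> (2 - s) ^ n" using nd by simp
  with half show ?thesis unfolding s_def by simp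
qed

lemma dense_linear_bound_small_n:
  assumes "n \<le> 11" "1 \<le> d" "d < n" "n \<le> 2 * d"
    and "\<not> ((n = 2 \<and> d = 1) \<or> (n = 3 \<and> d = 2) \<or> (n = 4 \<and> d = 2) \<or> (n = 4 \<and> d = 3))"
  shows "real n * 2 ^ (n - 1) * exp (- real d) \<le> (1 + (1 - real d / real n)) ^ n - 1"
proof -
  have "n = 2 \<or> n = 3 \<or> n = 4 \<or> n = 5 \<or> n = 6 \<or> n = 7 \<or> n = 8 \<or> n = 9 \<or> n = 10 \<or> n = 11"
    using assms by arith
  moreover have "d = 1 \<or> d = 2 \<or> d = 3 \<or> d = 4 \<or> d = 5 \<or> d = 6 \<or> d = 7 \<or> d = 8 \<or> d = 9 \<or> d = 10"
    using assms by arith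
  ultimately have "real n * 2 ^ (n - 1) * (1000/2718) ^ d \<le> (1 + (1 - real d / real n)) ^ n - 1"
    using assms(3-5) by (elim disjE) (simp_all add: power_divide)
  moreover have "real n * 2 ^ (n - 1) * exp (- real d) \<le> real n * 2 ^ (n - 1) * (1000/2718) ^ d"
    using exp_minus_nat_le by (intro mult_left_mono) auto
  ultimately show ?thesis by linarith
qed

(* The four cases with n <= 11 in which the linear bound fails; the sum is evaluated directly. *)
lemma binomial_sum_le_exceptional:
  assumes "(n = 2 \<and> d = 1) \<or> (n = 3 \<and> d = 2) \<or> (n = 4 \<and> d = 2) \<or> (n = 4 \<and> d = 3)"
  shows "(\<Sum>j=0..n. real (n choose j) * (1 - (1 - real d / real n) ^ j) ^ j) \<le> (2 - exp (- real d)) ^ n"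
proof -
  have "(\<Sum>j=0..n. real (n choose j) * (1 - (1 - real d / real n) ^ j) ^ j) \<le> (2 - (1000/2718) ^ d) ^ n"
    using assms
    by (elim disjE conjE; simp add: power_divide numeral_eq_Suc atLeast0_atMost_Suc binomial_Suc_Suc)
  also have "\<dots> \<le> (2 - exp (- real d)) ^ n"
    using exp_minus_nat_le[of d] power_le_one[of "1000/2718::real" d] by (intro power_mono) auto
  finally show ?thesis .
qed

lemma binomial_sum_le_dense:
  fixes n d :: nat
  assumes d: "1 \<le> d" "d < n" and nd: "n \<le> 2 * d"
  shows "(\<Sum>j=0..n. real (n choose j) * (1 - (1 - real d / real n) ^ j) ^ j) \<le> (2 - exp (- real d)) ^ n"
proof (cases "(n = 2 \<and> d = 1) \<or> (n = 3 \<and> d = 2) \<or> (n = 4 \<and> d = 2) \<or> (n = 4 \<and> d = 3)")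
  case True
  then show ?thesis by (rule binomial_sum_le_exceptional)
next
  case False
  have "real n * 2 ^ (n - 1) * exp (- real d) \<le> (1 + (1 - real d / real n)) ^ n - 1"
  proof (cases "12 \<le> n")
    case True
    then show ?thesis using dense_linear_bound_large_n nd d by blast
  next
    case small: False
    show ?thesis using dense_linear_bound_small_n[OF _ d nd False] small by simp
  qed
  moreover have "0 \<le> 1 - real d / real n" "1 - real d / real n \<le> 1" using d by auto
  ultimately show ?thesis
    using d by (intro binomial_sum_le_of_linear_bound) auto
qed

lemma binomial_sum_le_two_minus_exp:
  fixes n d :: nat
  assumes "1 \<le> d" "d < n"
  shows "(\<Sum>j=0..n. real (n choose j) * (1 - (1 - real d / real n) ^ j) ^ j) \<le> (2 - exp (- real d)) ^ n"
  using assms binomial_sum_le_sparse[of d n] binomial_sum_le_dense[of d n] by linarith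

theorem lemma6:
  fixes d n :: nat
  assumes "1 \<le> d" "d < n"
  defines "p \<equiv> real d / real n"
  defines "q \<equiv> 1 - p"
  shows "expected_trellis_vertices n p \<le> U_bound n q \<and> U_bound n q \<le> (2 - exp (- real d)) ^ n"
proof
  have p: "0 \<le> p" "p \<le> 1" using assms(2) by (simp_all add: p_def)
  have U: "U_bound n q = (\<Sum>j=0..n. real (n choose j) * no_zero_line_prob p j)"
    unfolding q_def by (rule U_bound_eq)
  show "expected_trellis_vertices n p \<le> U_bound n q"
    unfolding U by (rule expected_trellis_vertices_le[OF p])
  have "U_bound n q \<le> (\<Sum>j=0..n. real (n choose j) * (1 - (1 - p) ^ j) ^ j)"
    unfolding U by (intro sum_mono mult_left_mono no_zero_line_prob_le[OF p]) auto
  also have "\<dots> \<le> (2 - exp (- real d)) ^ n"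
    unfolding p_def by (rule binomial_sum_le_two_minus_exp[OF assms(1,2)])
  finally show "U_bound n q \<le> (2 - exp (- real d)) ^ n" .
qed

end
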